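(* Let $p:[0,\infty)\to\mathbb{R}$ be a non-increasing pricing function. Then the set of buyer types $$\Big\{(\theta,v)\ \Big|\ \min_{t\ge 0}\{p(t)+\theta t\}> v\Big\}$$ (the types who do not buy the item, whatever time they spend) is a convex subset of $\mathbb{R}^2$.
   Context: Model: a seller sells identical items in unlimited supply to unit-demand buyers. A buyer's type is $(\theta,v)$, where $\theta\ge 0$ is her cost per unit time (CPUT) and $v$ her valuation for the item. The seller posts a non-increasing pricing function $p$: a buyer who spends time $t\ge 0$ on the deal pays $p(t)$. A buyer of type $(\theta,v)$ buys the item iff $\min_{t\ge 0}\{p(t)+\theta t\}\le v$, where the minimum is taken to exist, as the model assumes when it defines the set $\arg\min_{t\ge 0}\{p(t)+\theta t\}$ of the buyer's best actions. *)

theory Defs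
  imports "HOL-Analysis.Analysis"
begin

text \<open>Minimal total payment (price plus time cost) of a buyer with cost per unit time
  theta facing pricing function p, i.e. min over t \<ge> 0 of p t + theta * t.
  Under the model's standing assumption that this minimum is attained, the infimum
  below is that minimum.\<close>
definition min_cost :: "(real \<Rightarrow> real) \<Rightarrow> real \<Rightarrow> real" where
  "min_cost p \<theta> = Inf ((\<lambda>t. p t + \<theta> * t) ` {0..})"

definition min_attained :: "(real \<Rightarrow> real) \<Rightarrow> real \<Rightarrow> bool" where
  "min_attained p \<theta> \<longleftrightarrow> (\<exists>t\<ge>0. \<forall>s\<ge>0. p t + \<theta> * t \<le> p s + \<theta> * s)"

end

theory Submission
  imports Defs
begin

text \<open>Each payment p t + \<theta> t is affine in \<theta>, so their minimum min_cost p is concave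
  on [0, \<infinity>), and the strict hypograph of a concave function is convex.\<close>

lemma convex_strict_hypograph:
  fixes f :: "'a::real_vector \<Rightarrow> real"
  assumes "concave_on S f"
  shows "convex {(x, v). x \<in> S \<and> v < f x}"
proof (rule convexI, clarsimp, intro conjI)
  fix x y :: 'a and a b u w :: real
  assume uw: "0 \<le> u" "0 \<le> w" "u + w = 1"
    and x: "x \<in> S" "a < f x" and y: "y \<in> S" "b < f y"
  show "u *\<^sub>R x + w *\<^sub>R y \<in> S"
    using convexD[OF concave_on_imp_convex[OF assms] x(1) y(1) uw] .
  have "u * a + w * b < u * f x + w * f y"
  proof (cases "u = 0")
    case True
    then show ?thesis using uw y by simp
  next
    case False
    then have "u * a < u * f x" using uw x by simp
    moreover have "w * b \<le> w * f y" using uw y by (simp add: mult_left_mono)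
    ultimately show ?thesis by linarith
  qed
  also have "\<dots> \<le> f (u *\<^sub>R x + w *\<^sub>R y)"
    using assms x y uw by (simp add: concave_on_iff)
  finally show "u * a + w * b < f (u *\<^sub>R x + w *\<^sub>R y)" .
qed

lemma min_cost_eq_minimum:
  assumes "t \<ge> 0" and "\<And>s. s \<ge> 0 \<Longrightarrow> p t + \<theta> * t \<le> p s + \<theta> * s"
  shows "min_cost p \<theta> = p t + \<theta> * t"
  unfolding min_cost_def by (rule cInf_eq_minimum) (use assms in auto)

lemma min_cost_le:
  assumes "min_attained p \<theta>" and "s \<ge> 0"
  shows "min_cost p \<theta> \<le> p s + \<theta> * s"
proof -
  obtain t where "t \<ge> 0" "\<And>s. s \<ge> 0 \<Longrightarrow> p t + \<theta> * t \<le> p s + \<theta> * s"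
    using assms(1) unfolding min_attained_def by blast
  then show ?thesis using min_cost_eq_minimum assms(2) by metis
qed

lemma concave_on_min_cost:
  assumes "\<And>\<theta>. \<theta> \<ge> 0 \<Longrightarrow> min_attained p \<theta>"
  shows "concave_on {0..} (min_cost p)"
  unfolding concave_on_iff
proof (intro conjI convex_real_interval ballI allI impI)
  fix \<alpha> \<beta> u w :: real
  assume \<alpha>: "\<alpha> \<in> {0..}" and \<beta>: "\<beta> \<in> {0..}" and uw: "0 \<le> u" "0 \<le> w" "u + w = 1"
  define \<theta> where "\<theta> = u * \<alpha> + w * \<beta>"
  have "\<theta> \<ge> 0" using \<alpha> \<beta> uw by (simp add: \<theta>_def)
  then obtain t where t: "t \<ge> 0" "\<And>s. s \<ge> 0 \<Longrightarrow> p t + \<theta> * t \<le> p s + \<theta> * s"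
    using assms unfolding min_attained_def by blast
  have "u * min_cost p \<alpha> + w * min_cost p \<beta> \<le> u * (p t + \<alpha> * t) + w * (p t + \<beta> * t)"
    using assms \<alpha> \<beta> uw t(1) by (intro add_mono mult_left_mono min_cost_le) auto
  also have "\<dots> = p t + \<theta> * t"
    using uw(3) unfolding \<theta>_def by algebra
  also have "\<dots> = min_cost p \<theta>"
    using t by (rule min_cost_eq_minimum[symmetric])
  finally show "u * min_cost p \<alpha> + w * min_cost p \<beta> \<le> min_cost p (u *\<^sub>R \<alpha> + w *\<^sub>R \<beta>)"
    by (simp add: \<theta>_def)
qed

theorem lemma1:
  fixes p :: "real \<Rightarrow> real"
  assumes "antimono_on {0..} p"
    and "\<And>\<theta>. \<theta> \<ge> 0 \<Longrightarrow> min_attained p \<theta>"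
  shows "convex {(\<theta>::real, v::real). \<theta> \<ge> 0 \<and> min_cost p \<theta> > v}"
proof -
  have "{(\<theta>::real, v::real). \<theta> \<ge> 0 \<and> min_cost p \<theta> > v}
      = {(\<theta>, v). \<theta> \<in> {0..} \<and> v < min_cost p \<theta>}"
    by auto
  then show ?thesis
    using convex_strict_hypograph[OF concave_on_min_cost[OF assms(2)]] by simp
qed

end
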